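(* Consider SEG: $X_{t+1/2}=X_t-\gamma F_t$, $X_{t+1}=X_t-\alpha\gamma F_{t+1/2}$, where $F_t=F(X_t)+U_t(X_t)$ and $F_{t+1/2}=F(X_{t+1/2})+U_{t+1/2}(X_{t+1/2})$. Let $F:\mathbb{R}^d\to\mathbb{R}^d$ be $L$-Lipschitz, let $x^*\in X^*=\{x:F(x)=0\}$ satisfy $\langle F(x),x-x^*\rangle\ge\mu\|x-x^*\|^2-\lambda$ for all $x$ (with $\lambda\ge0,\mu>0$), and assume the stochastic oracle assumptions of the context. Let $Z_t=F_{t+1/2}$ and $\mathrm{drift}_t=\gamma\,\mathbb{E}[\langle Z_t,X_t-x^*\rangle\mid\mathcal{F}_t]$. If $0<\gamma<\frac1{2\mu+\sqrt3L}$, then $$-\mathrm{drift}_t\le-\frac{\mu\gamma}{2}\|X_t-x^*\|^2+(\gamma\lambda+3\gamma^2\sigma^2).$$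
   Context: Stochastic oracle: noise fields are i.i.d. random fields; filtration $(\mathcal{F}_t)$ (history of the iterates) with $\mathcal{F}_{t+1/2}=\mathcal{F}_t$; $U_t(X_t)$ is $\mathcal{F}_{t+1}$- but not $\mathcal{F}_t$-measurable; $\mathbb{E}[U_t(x)\mid\mathcal{F}_t]=0$ and $\mathbb{E}[\|U_t(x)\|^2\mid\mathcal{F}_t]\le\sigma^2$ for all $x$ (and likewise for $U_{t+1/2}$). *)

theory Defs
  imports "HOL-Probability.Probability"
begin

definition seg_half :: "('v::real_vector \<Rightarrow> 'v) \<Rightarrow> real \<Rightarrow> 'v \<Rightarrow> 'v \<Rightarrow> 'v" where
  "seg_half F \<gamma> x u = x - \<gamma> *\<^sub>R (F x + u)"

end

theory Submission
  imports Defs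
begin

(* Let y = x - gamma (F x + u) be the extrapolated point and e = x - xs. Writing
   e = (y - xs) + gamma (F x + u), weak monotonicity at y and the Lipschitz bound on F y - F x
   give a lower bound for <F y, e> that is quadratic in the noise u. The second noise U2 is
   evaluated at y but has mean zero for every point, so by Fubini it drops out of the
   expectation; averaging over U1 then kills the terms linear in u and leaves
   mu |e - gamma F x|^2 + gamma (1 - L gamma) |F x|^2 + (mu - L) gamma^2 E|u|^2 - lam.
   Since gamma (mu + L) <= 1, the |F x|^2 terms pay for |a - b|^2 >= |a|^2/2 - |b|^2, and
   L gamma <= 1 bounds the noise term by gamma sigma^2. *)

lemma (in finite_measure) lipschitz_on_UNIV_integrable_comp:
  fixes F :: "'c::{banach, second_countable_topology} \<Rightarrow> 'd::{banach, second_countable_topology}"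
  assumes lip: "L-lipschitz_on UNIV F" and Z: "integrable M Z"
  shows "integrable M (\<lambda>\<omega>. F (Z \<omega>))"
proof (rule Bochner_Integration.integrable_bound)
  show "integrable M (\<lambda>\<omega>. norm (F 0) + L * norm (Z \<omega>))"
    using Z by auto
  have "F \<in> borel_measurable borel"
    using lipschitz_on_continuous_on[OF lip] by (rule borel_measurable_continuous_onI)
  then show "(\<lambda>\<omega>. F (Z \<omega>)) \<in> borel_measurable M"
    using borel_measurable_integrable[OF Z] by measurable
  have "norm (F z) \<le> norm (F 0) + L * norm z" for z
    using lipschitz_on_normD[OF lip, of z 0] norm_triangle_sub[of "F z" "F 0"] by simp
  then show "AE \<omega> in M. norm (F (Z \<omega>)) \<le> norm (norm (F 0) + L * norm (Z \<omega>))"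
    using lipschitz_on_nonneg[OF lip] by (intro AE_I2) (smt (verit) norm_ge_zero real_norm_def)
qed

lemma (in prob_space) integral_norm_le_second_moment:
  fixes f :: "'a \<Rightarrow> 'b::{banach, second_countable_topology}"
  assumes "integrable M f" and "integrable M (\<lambda>\<omega>. (norm (f \<omega>))\<^sup>2)"
  shows "(\<integral>\<omega>. norm (f \<omega>) \<partial>M) \<le> (1 + (\<integral>\<omega>. (norm (f \<omega>))\<^sup>2 \<partial>M)) / 2"
proof -
  have "(\<integral>\<omega>. norm (f \<omega>) \<partial>M) \<le> (\<integral>\<omega>. (1 + (norm (f \<omega>))\<^sup>2) / 2 \<partial>M)"
  proof (rule integral_mono)
    fix \<omega>
    have "0 \<le> (norm (f \<omega>) - 1)\<^sup>2" by simp
    then show "norm (f \<omega>) \<le> (1 + (norm (f \<omega>))\<^sup>2) / 2"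
      by (simp add: power2_eq_square algebra_simps)
  qed (use assms in auto)
  also have "\<dots> = (1 + (\<integral>\<omega>. (norm (f \<omega>))\<^sup>2 \<partial>M)) / 2"
    using assms(2) by (simp add: prob_space)
  finally show ?thesis .
qed

lemma (in prob_space) integral_norm_add_scaleR_mean_zero_sq:
  fixes U :: "'a \<Rightarrow> 'v::{real_inner, banach, second_countable_topology}"
  assumes U_int: "integrable M U" and U_mean: "(\<integral>\<omega>. U \<omega> \<partial>M) = 0"
    and U_sq_int: "integrable M (\<lambda>\<omega>. (norm (U \<omega>))\<^sup>2)"
  shows "integrable M (\<lambda>\<omega>. (norm (a + c *\<^sub>R U \<omega>))\<^sup>2)"
    and "(\<integral>\<omega>. (norm (a + c *\<^sub>R U \<omega>))\<^sup>2 \<partial>M) = (norm a)\<^sup>2 + c\<^sup>2 * (\<integral>\<omega>. (norm (U \<omega>))\<^sup>2 \<partial>M)"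
proof -
  have expand: "(norm (a + c *\<^sub>R U \<omega>))\<^sup>2 = (norm a)\<^sup>2 + 2 * c * inner a (U \<omega>) + c\<^sup>2 * (norm (U \<omega>))\<^sup>2" for \<omega>
    using dot_norm[of a "c *\<^sub>R U \<omega>"] by (simp add: power_mult_distrib)
  show "integrable M (\<lambda>\<omega>. (norm (a + c *\<^sub>R U \<omega>))\<^sup>2)"
    unfolding expand using U_int U_sq_int by auto
  show "(\<integral>\<omega>. (norm (a + c *\<^sub>R U \<omega>))\<^sup>2 \<partial>M) = (norm a)\<^sup>2 + c\<^sup>2 * (\<integral>\<omega>. (norm (U \<omega>))\<^sup>2 \<partial>M)"
    unfolding expand using U_int U_sq_int U_mean by (simp add: prob_space)
qed

lemma (in pair_prob_space) integral_add_mean_zero_field: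
  fixes V :: "'b \<Rightarrow> 'c \<Rightarrow> 'e::{banach, second_countable_topology}"
  assumes V_meas: "(\<lambda>(\<omega>, y). V \<omega> y) \<in> borel_measurable (M2 \<Otimes>\<^sub>M N)"
    and V_int: "\<And>y. y \<in> space N \<Longrightarrow> integrable M2 (\<lambda>\<omega>. V \<omega> y)"
    and V_mean: "\<And>y. y \<in> space N \<Longrightarrow> (\<integral>\<omega>. V \<omega> y \<partial>M2) = 0"
    and V_norm: "\<And>y. y \<in> space N \<Longrightarrow> (\<integral>\<omega>. norm (V \<omega> y) \<partial>M2) \<le> B"
    and Y: "Y \<in> measurable M1 N" and G: "integrable M1 G"
  shows "integrable (M1 \<Otimes>\<^sub>M M2) (\<lambda>(\<omega>1, \<omega>2). G \<omega>1 + V \<omega>2 (Y \<omega>1))"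
    and "(\<integral>(\<omega>1, \<omega>2). G \<omega>1 + V \<omega>2 (Y \<omega>1) \<partial>(M1 \<Otimes>\<^sub>M M2)) = integral\<^sup>L M1 G"
proof -
  define h where "h = (\<lambda>(\<omega>1, \<omega>2). G \<omega>1 + V \<omega>2 (Y \<omega>1))"
  have [measurable]: "G \<in> borel_measurable M1"
    using G by (rule borel_measurable_integrable)
  have "(\<lambda>p. (\<lambda>(\<omega>, y). V \<omega> y) (snd p, Y (fst p))) \<in> borel_measurable (M1 \<Otimes>\<^sub>M M2)"
    by (rule measurable_compose[OF _ V_meas]) (use Y in measurable)
  then have h_meas [measurable]: "h \<in> borel_measurable (M1 \<Otimes>\<^sub>M M2)"
    unfolding h_def by (simp add: split_beta')
  have Y_space: "Y \<omega>1 \<in> space N" if "\<omega>1 \<in> space M1" for \<omega>1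
    using measurable_space[OF Y that] .
  have section_int: "integrable M2 (\<lambda>\<omega>2. h (\<omega>1, \<omega>2))" if "\<omega>1 \<in> space M1" for \<omega>1
    using V_int[OF Y_space[OF that]] by (simp add: h_def)
  have section_integral: "(\<integral>\<omega>2. h (\<omega>1, \<omega>2) \<partial>M2) = G \<omega>1" if "\<omega>1 \<in> space M1" for \<omega>1
    using V_int[OF Y_space[OF that]] V_mean[OF Y_space[OF that]] by (simp add: h_def M2.prob_space)
  show h_int: "integrable (M1 \<Otimes>\<^sub>M M2) h"
  proof (rule Fubini_integrable[OF h_meas])
    show "integrable M1 (\<lambda>\<omega>1. \<integral>\<omega>2. norm (h (\<omega>1, \<omega>2)) \<partial>M2)"
    proof (rule Bochner_Integration.integrable_bound)
      show "integrable M1 (\<lambda>\<omega>1. norm (G \<omega>1) + B)"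
        using G by auto
      show "AE \<omega>1 in M1. norm (\<integral>\<omega>2. norm (h (\<omega>1, \<omega>2)) \<partial>M2) \<le> norm (norm (G \<omega>1) + B)"
      proof (rule AE_I2)
        fix \<omega>1 assume \<omega>1: "\<omega>1 \<in> space M1"
        have "(\<integral>\<omega>2. norm (h (\<omega>1, \<omega>2)) \<partial>M2) \<le> (\<integral>\<omega>2. norm (G \<omega>1) + norm (V \<omega>2 (Y \<omega>1)) \<partial>M2)"
          using section_int[OF \<omega>1] V_int[OF Y_space[OF \<omega>1]]
          by (intro integral_mono) (auto simp: h_def norm_triangle_ineq)
        also have "\<dots> \<le> norm (G \<omega>1) + B"
          using V_int[OF Y_space[OF \<omega>1]] V_norm[OF Y_space[OF \<omega>1]] by (simp add: M2.prob_space)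
        finally show "norm (\<integral>\<omega>2. norm (h (\<omega>1, \<omega>2)) \<partial>M2) \<le> norm (norm (G \<omega>1) + B)"
          by simp
      qed
    qed measurable
    show "AE \<omega>1 in M1. integrable M2 (\<lambda>\<omega>2. h (\<omega>1, \<omega>2))"
      using section_int by (rule AE_I2)
  qed
  show "integral\<^sup>L (M1 \<Otimes>\<^sub>M M2) h = integral\<^sup>L M1 G"
    using integral_fst'[OF h_int] section_integral by (simp cong: Bochner_Integration.integral_cong)
qed

lemma (in pair_prob_space) integral_inner_add_mean_zero_field:
  fixes V :: "'b \<Rightarrow> 'c \<Rightarrow> 'e::{real_inner, banach, second_countable_topology}"
  assumes V_meas: "(\<lambda>(\<omega>, y). V \<omega> y) \<in> borel_measurable (M2 \<Otimes>\<^sub>M N)"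
    and V_int: "\<And>y. y \<in> space N \<Longrightarrow> integrable M2 (\<lambda>\<omega>. V \<omega> y)"
    and V_mean: "\<And>y. y \<in> space N \<Longrightarrow> (\<integral>\<omega>. V \<omega> y \<partial>M2) = 0"
    and V_norm: "\<And>y. y \<in> space N \<Longrightarrow> (\<integral>\<omega>. norm (V \<omega> y) \<partial>M2) \<le> B"
    and Y: "Y \<in> measurable M1 N" and G: "integrable M1 G"
  shows "(\<integral>(\<omega>1, \<omega>2). inner (G \<omega>1 + V \<omega>2 (Y \<omega>1)) e \<partial>(M1 \<Otimes>\<^sub>M M2)) = (\<integral>\<omega>. inner (G \<omega>) e \<partial>M1)"
  using integral_add_mean_zero_field[OF assms] G by (simp add: split_beta')

lemma norm_diff_sq_ge:
  fixes a b :: "'v::real_normed_vector"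
  shows "(norm a)\<^sup>2 / 2 - (norm b)\<^sup>2 \<le> (norm (a - b))\<^sup>2"
proof -
  have "norm a \<le> norm (a - b) + norm b"
    using norm_triangle_sub[of a b] by simp
  then have "(norm a)\<^sup>2 \<le> (norm (a - b) + norm b)\<^sup>2"
    by (simp add: power_mono)
  also have "\<dots> \<le> 2 * (norm (a - b))\<^sup>2 + 2 * (norm b)\<^sup>2"
    using sum_squares_bound[of "norm (a - b)" "norm b"] by (simp add: power2_sum)
  finally show ?thesis by simp
qed

lemma seg_half_inner_ge:
  fixes F :: "'v::real_inner \<Rightarrow> 'v"
  assumes lip: "L-lipschitz_on UNIV F"
    and weak_mon: "\<forall>y. inner (F y) (y - xs) \<ge> \<mu> * (norm (y - xs))\<^sup>2 - lam"
    and gam: "0 \<le> \<gamma>"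
  shows "inner (F (seg_half F \<gamma> x u)) (x - xs) \<ge> \<mu> * (norm (seg_half F \<gamma> x u - xs))\<^sup>2 - lam
           + \<gamma> * inner (F x) (F x + u) - L * \<gamma>\<^sup>2 * (norm (F x + u))\<^sup>2"
proof -
  define g where "g = F x + u"
  define y where "y = seg_half F \<gamma> x u"
  have y: "x - y = \<gamma> *\<^sub>R g"
    by (simp add: y_def g_def seg_half_def)
  have "norm (F x - F y) \<le> L * (\<gamma> * norm g)"
    using lipschitz_on_normD[OF lip, of x y] y gam by simp
  then have "inner (F x - F y) g \<le> L * (\<gamma> * norm g) * norm g"
    using norm_cauchy_schwarz[of "F x - F y" g] mult_right_mono[of _ _ "norm g"] by force
  then have "\<gamma> * inner (F x - F y) g \<le> \<gamma> * (L * \<gamma> * (norm g)\<^sup>2)"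
    using gam by (simp add: mult_left_mono power2_eq_square mult.assoc)
  then have lipschitz_part: "\<gamma> * inner (F x) g - L * \<gamma>\<^sup>2 * (norm g)\<^sup>2 \<le> \<gamma> * inner (F y) g"
    by (simp add: inner_diff_left power2_eq_square algebra_simps)
  have "x - xs = (y - xs) + \<gamma> *\<^sub>R g"
    using y by (simp add: algebra_simps)
  then have "inner (F y) (x - xs) = inner (F y) (y - xs) + \<gamma> * inner (F y) g"
    by (simp only: inner_add_right inner_scaleR_right)
  then show ?thesis
    unfolding y_def[symmetric] g_def[symmetric]
    using weak_mon[rule_format, of y] lipschitz_part by linarith
qed

lemma (in prob_space) seg_half_expected_inner_ge:
  fixes F :: "'v::{real_inner, banach, second_countable_topology} \<Rightarrow> 'v" and U :: "'a \<Rightarrow> 'v"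
  assumes lip: "L-lipschitz_on UNIV F"
    and weak_mon: "\<forall>y. inner (F y) (y - xs) \<ge> \<mu> * (norm (y - xs))\<^sup>2 - lam"
    and mu: "0 \<le> \<mu>" and gam: "0 \<le> \<gamma>" and gam_small: "\<gamma> * (\<mu> + L) \<le> 1"
    and U_int: "integrable M U" and U_mean: "(\<integral>\<omega>. U \<omega> \<partial>M) = 0"
    and U_sq_int: "integrable M (\<lambda>\<omega>. (norm (U \<omega>))\<^sup>2)"
    and U_var: "(\<integral>\<omega>. (norm (U \<omega>))\<^sup>2 \<partial>M) \<le> \<sigma>\<^sup>2"
  shows "\<mu> / 2 * (norm (x - xs))\<^sup>2 - lam - \<gamma> * \<sigma>\<^sup>2
           \<le> (\<integral>\<omega>. inner (F (seg_half F \<gamma> x (U \<omega>))) (x - xs) \<partial>M)"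
proof -
  define s where "s = (\<integral>\<omega>. (norm (U \<omega>))\<^sup>2 \<partial>M)"
  define a where "a = x - xs - \<gamma> *\<^sub>R F x"
  have shift: "seg_half F \<gamma> x u - xs = a + (- \<gamma>) *\<^sub>R u" for u
    by (simp add: seg_half_def a_def algebra_simps)
  note dist_sq = integral_norm_add_scaleR_mean_zero_sq[OF U_int U_mean U_sq_int, of a "- \<gamma>"]
  note grad_sq = integral_norm_add_scaleR_mean_zero_sq[OF U_int U_mean U_sq_int, of "F x" 1, unfolded scaleR_one]
  have "integrable M (\<lambda>\<omega>. seg_half F \<gamma> x (U \<omega>))"
    using U_int by (simp add: seg_half_def)
  then have inner_int: "integrable M (\<lambda>\<omega>. inner (F (seg_half F \<gamma> x (U \<omega>))) (x - xs))"
    by (intro integrable_inner_left lipschitz_on_UNIV_integrable_comp[OF lip])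
  have "(\<integral>\<omega>. \<mu> * (norm (a + (- \<gamma>) *\<^sub>R U \<omega>))\<^sup>2 - lam + \<gamma> * inner (F x) (F x + U \<omega>)
            - L * \<gamma>\<^sup>2 * (norm (F x + U \<omega>))\<^sup>2 \<partial>M)
        \<le> (\<integral>\<omega>. inner (F (seg_half F \<gamma> x (U \<omega>))) (x - xs) \<partial>M)"
    using dist_sq(1) grad_sq(1) U_int inner_int
      seg_half_inner_ge[OF lip weak_mon gam, of x] by (intro integral_mono) (auto simp: shift)
  also have "(\<integral>\<omega>. \<mu> * (norm (a + (- \<gamma>) *\<^sub>R U \<omega>))\<^sup>2 - lam + \<gamma> * inner (F x) (F x + U \<omega>)
            - L * \<gamma>\<^sup>2 * (norm (F x + U \<omega>))\<^sup>2 \<partial>M)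
      = \<mu> * ((norm a)\<^sup>2 + \<gamma>\<^sup>2 * s) - lam + \<gamma> * (norm (F x))\<^sup>2 - L * \<gamma>\<^sup>2 * ((norm (F x))\<^sup>2 + s)"
    using dist_sq grad_sq U_int U_mean
    by (simp add: s_def prob_space inner_add_right power2_norm_eq_inner)
  finally have lower: "\<mu> * ((norm a)\<^sup>2 + \<gamma>\<^sup>2 * s) - lam + \<gamma> * (norm (F x))\<^sup>2 - L * \<gamma>\<^sup>2 * ((norm (F x))\<^sup>2 + s)
      \<le> (\<integral>\<omega>. inner (F (seg_half F \<gamma> x (U \<omega>))) (x - xs) \<partial>M)" .
  have "\<mu> * ((norm (x - xs))\<^sup>2 / 2 - \<gamma>\<^sup>2 * (norm (F x))\<^sup>2) \<le> \<mu> * (norm a)\<^sup>2"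
    using norm_diff_sq_ge[of "x - xs" "\<gamma> *\<^sub>R F x"] mu
    by (intro mult_left_mono) (auto simp: a_def power_mult_distrib)
  moreover have "0 \<le> \<gamma> * (norm (F x))\<^sup>2 * (1 - \<gamma> * (\<mu> + L))"
    using gam gam_small by simp
  moreover have "L * \<gamma>\<^sup>2 * s \<le> \<gamma> * \<sigma>\<^sup>2 + \<mu> * \<gamma>\<^sup>2 * s"
  proof -
    have s_nonneg: "0 \<le> s"
      unfolding s_def by simp
    have "L * \<gamma> \<le> 1"
      using gam_small mult_nonneg_nonneg[OF gam mu] by (simp add: distrib_left mult.commute)
    then have "L * \<gamma> * s \<le> \<sigma>\<^sup>2"
      using mult_right_mono[OF _ s_nonneg, of "L * \<gamma>" 1] U_var s_def by simp
    then have "\<gamma> * (L * \<gamma> * s) \<le> \<gamma> * \<sigma>\<^sup>2"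
      by (rule mult_left_mono[OF _ gam])
    moreover have "0 \<le> \<mu> * \<gamma>\<^sup>2 * s"
      using mu s_nonneg by simp
    ultimately show ?thesis
      by (simp add: power2_eq_square algebra_simps)
  qed
  ultimately show ?thesis
    using lower by (simp add: algebra_simps power2_eq_square)
qed

lemma step_size_bound:
  fixes \<gamma> \<mu> L :: real
  assumes "0 < \<mu>" and "0 \<le> L" and "0 < \<gamma>" and "\<gamma> < 1 / (2 * \<mu> + sqrt 3 * L)"
  shows "\<gamma> * (\<mu> + L) \<le> 1"
proof -
  have "L \<le> sqrt 3 * L"
    using mult_right_mono[of 1 "sqrt 3" L] assms(2) by simp
  then have "\<mu> + L \<le> 2 * \<mu> + sqrt 3 * L"
    using assms(1) by simp
  moreover have "0 < 2 * \<mu> + sqrt 3 * L"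
    using assms(1,2) by (intro add_pos_nonneg) auto
  ultimately have "\<gamma> * (\<mu> + L) \<le> \<gamma> * (2 * \<mu> + sqrt 3 * L)" and "\<gamma> * (2 * \<mu> + sqrt 3 * L) < 1"
    using assms(3,4) by (simp_all add: pos_less_divide_eq)
  then show ?thesis
    by simp
qed

theorem propositionB2:
  fixes F :: "'v::euclidean_space \<Rightarrow> 'v"
    and L \<mu> lam \<gamma> \<sigma> :: real
    and xs x :: 'v
    and M1 :: "'a measure" and M2 :: "'b measure"
    and U1 :: "'a \<Rightarrow> 'v \<Rightarrow> 'v" and U2 :: "'b \<Rightarrow> 'v \<Rightarrow> 'v"
  assumes lip: "L-lipschitz_on UNIV F"
    and sol: "F xs = 0"
    and weak_mon: "\<forall>y. inner (F y) (y - xs) \<ge> \<mu> * (norm (y - xs))\<^sup>2 - lam"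
    and lam_nn: "lam \<ge> 0" and mu: "\<mu> > 0"
    and P1: "prob_space M1" and P2: "prob_space M2"
    and U1_meas: "(\<lambda>(\<omega>, y). U1 \<omega> y) \<in> borel_measurable (M1 \<Otimes>\<^sub>M borel)"
    and U2_meas: "(\<lambda>(\<omega>, y). U2 \<omega> y) \<in> borel_measurable (M2 \<Otimes>\<^sub>M borel)"
    and U1_int: "\<forall>y. integrable M1 (\<lambda>\<omega>. U1 \<omega> y)"
    and U1_mean: "\<forall>y. (\<integral>\<omega>. U1 \<omega> y \<partial>M1) = 0"
    and U1_sq_int: "\<forall>y. integrable M1 (\<lambda>\<omega>. (norm (U1 \<omega> y))\<^sup>2)"
    and U1_var: "\<forall>y. (\<integral>\<omega>. (norm (U1 \<omega> y))\<^sup>2 \<partial>M1) \<le> \<sigma>\<^sup>2"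
    and U2_int: "\<forall>y. integrable M2 (\<lambda>\<omega>. U2 \<omega> y)"
    and U2_mean: "\<forall>y. (\<integral>\<omega>. U2 \<omega> y \<partial>M2) = 0"
    and U2_sq_int: "\<forall>y. integrable M2 (\<lambda>\<omega>. (norm (U2 \<omega> y))\<^sup>2)"
    and U2_var: "\<forall>y. (\<integral>\<omega>. (norm (U2 \<omega> y))\<^sup>2 \<partial>M2) \<le> \<sigma>\<^sup>2"
    and gam_pos: "0 < \<gamma>"
    and gam_small: "\<gamma> < 1 / (2 * \<mu> + sqrt 3 * L)"
  shows "- (\<gamma> * (\<integral>\<omega>. (case \<omega> of (\<omega>1, \<omega>2) \<Rightarrow>
              inner (F (seg_half F \<gamma> x (U1 \<omega>1 x)) + U2 \<omega>2 (seg_half F \<gamma> x (U1 \<omega>1 x))) (x - xs))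
            \<partial>(M1 \<Otimes>\<^sub>M M2)))
         \<le> - (\<mu> * \<gamma> / 2) * (norm (x - xs))\<^sup>2 + (\<gamma> * lam + 3 * \<gamma>\<^sup>2 * \<sigma>\<^sup>2)"
proof -
  interpret M1: prob_space M1 by (rule P1)
  interpret M2: prob_space M2 by (rule P2)
  interpret P: pair_prob_space M1 M2 by unfold_locales
  define Y where "Y = (\<lambda>\<omega>. seg_half F \<gamma> x (U1 \<omega> x))"
  have Y_int: "integrable M1 Y"
    using U1_int by (simp add: Y_def seg_half_def)
  have U2_norm: "(\<integral>\<omega>. norm (U2 \<omega> y) \<partial>M2) \<le> (1 + \<sigma>\<^sup>2) / 2" for y
    using M2.integral_norm_le_second_moment[of "\<lambda>\<omega>. U2 \<omega> y"] U2_int U2_sq_int U2_var[rule_format, of y]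
    by simp
  have "(\<integral>\<omega>. (case \<omega> of (\<omega>1, \<omega>2) \<Rightarrow>
              inner (F (seg_half F \<gamma> x (U1 \<omega>1 x)) + U2 \<omega>2 (seg_half F \<gamma> x (U1 \<omega>1 x))) (x - xs))
            \<partial>(M1 \<Otimes>\<^sub>M M2)) = (\<integral>\<omega>. inner (F (Y \<omega>)) (x - xs) \<partial>M1)" (is "?E = _")
    using P.integral_inner_add_mean_zero_field[OF U2_meas _ _ U2_norm borel_measurable_integrable[OF Y_int]
        M1.lipschitz_on_UNIV_integrable_comp[OF lip Y_int]] U2_int U2_mean
    by (simp add: Y_def)
  also have "\<dots> \<ge> \<mu> / 2 * (norm (x - xs))\<^sup>2 - lam - \<gamma> * \<sigma>\<^sup>2"
    using M1.seg_half_expected_inner_ge[OF lip weak_mon _ _ step_size_bound] lipschitz_on_nonneg[OF lip]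
      U1_int U1_mean U1_sq_int U1_var mu gam_pos gam_small
    by (simp add: Y_def)
  finally have "\<gamma> * (\<mu> / 2 * (norm (x - xs))\<^sup>2 - lam - \<gamma> * \<sigma>\<^sup>2) \<le> \<gamma> * ?E"
    using gam_pos by (intro mult_left_mono) auto
  moreover have "\<gamma> * (\<mu> / 2 * (norm (x - xs))\<^sup>2 - lam - \<gamma> * \<sigma>\<^sup>2)
      = \<mu> * \<gamma> / 2 * (norm (x - xs))\<^sup>2 - \<gamma> * lam - \<gamma>\<^sup>2 * \<sigma>\<^sup>2"
    by (simp add: algebra_simps power2_eq_square)
  moreover have "0 \<le> \<gamma>\<^sup>2 * \<sigma>\<^sup>2"
    by simp
  ultimately show ?thesis
    by linarith
qed

end
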